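(* Let $\pi_0,\dots,\pi_{T-1}$ be a connection schedule on $[N]$ with virtual topology $G$, let $a\in[N]$, $t\in\mathbb Z$, and let $L,h$ be positive integers with $h\le L/3$. Let $k$ be the number of nodes $b\in[N]\setminus\{a\}$ for which there exists a path in $G$ from $(a,t)$ to some vertex $(b,t')$ with $t'-t\le L$ that contains at most $h$ physical edges. Then $k\le 2\binom{L}{h}$.
   Context: A connection schedule of size $N$ and period $T\ge1$ is a sequence of permutations $\pi_0,\dots,\pi_{T-1}$ of $[N]=\{1,\dots,N\}$; write $\pi_t=\pi_{t\bmod T}$ for $t\in\mathbb Z$. Its virtual topology $G$ is the directed graph on $[N]\times\mathbb Z$ with virtual edges $(i,t)\to(i,t+1)$ and physical edges $(i,t)\to(\pi_t(i),t+1)$ for all $i\in[N]$, $t\in\mathbb Z$. *)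

theory Defs
  imports Main
begin

definition sched_perm :: "nat \<Rightarrow> (nat \<Rightarrow> nat \<Rightarrow> nat) \<Rightarrow> int \<Rightarrow> nat \<Rightarrow> nat" where
  "sched_perm T \<pi> t = \<pi> (nat (t mod int T))"

definition is_schedule :: "nat \<Rightarrow> nat \<Rightarrow> (nat \<Rightarrow> nat \<Rightarrow> nat) \<Rightarrow> bool" where
  "is_schedule N T \<pi> \<longleftrightarrow> T \<ge> 1 \<and> (\<forall>s<T. bij_betw (\<pi> s) {1..N} {1..N})"

definition virtual_edge :: "nat \<Rightarrow> nat \<times> int \<Rightarrow> nat \<times> int \<Rightarrow> bool" where
  "virtual_edge N v w \<longleftrightarrow> fst v \<in> {1..N} \<and> w = (fst v, snd v + 1)"

definition physical_edge :: "nat \<Rightarrow> nat \<Rightarrow> (nat \<Rightarrow> nat \<Rightarrow> nat) \<Rightarrow> nat \<times> int \<Rightarrow> nat \<times> int \<Rightarrow> bool" where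
  "physical_edge N T \<pi> v w \<longleftrightarrow> fst v \<in> {1..N} \<and> w = (sched_perm T \<pi> (snd v) (fst v), snd v + 1)"

inductive vpath :: "nat \<Rightarrow> nat \<Rightarrow> (nat \<Rightarrow> nat \<Rightarrow> nat) \<Rightarrow> nat \<times> int \<Rightarrow> nat \<times> int \<Rightarrow> nat \<Rightarrow> bool"
  for N T \<pi> where
  vpath_nil: "vpath N T \<pi> v v 0"
| vpath_virtual: "virtual_edge N v w \<Longrightarrow> vpath N T \<pi> w u k \<Longrightarrow> vpath N T \<pi> v u k"
| vpath_physical: "physical_edge N T \<pi> v w \<Longrightarrow> vpath N T \<pi> w u k \<Longrightarrow> vpath N T \<pi> v u (Suc k)"

end

theory Submission
  imports Defs
begin

text \<open>The endpoint of a path in the virtual topology depends only on its start and on the set of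
  time steps at which it uses a physical edge. Extending a path from \<open>(a, t)\<close> of
  duration at most \<open>L\<close> by virtual edges up to time \<open>t + L\<close>, every node reachable with at most
  \<open>h\<close> physical edges is the image of a subset of \<open>{t..<t + L}\<close> with at most \<open>h\<close> elements.
  There are \<open>\<Sum>j\<le>h. L choose j\<close> such subsets, and this sum is at most \<open>2 * (L choose h)\<close>
  because the binomial coefficients at least double from one term to the next while \<open>3 j \<le> L\<close>.\<close>

fun schedule_walk :: "nat \<Rightarrow> (nat \<Rightarrow> nat \<Rightarrow> nat) \<Rightarrow> nat \<Rightarrow> int \<Rightarrow> int set \<Rightarrow> nat \<Rightarrow> nat" where
  "schedule_walk T \<pi> x s S 0 = x"
| "schedule_walk T \<pi> x s S (Suc n) =
     schedule_walk T \<pi> (if s \<in> S then sched_perm T \<pi> s x else x) (s + 1) S n"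

lemma schedule_walk_idle:
  assumes "S \<inter> {s..<s + int m} = {}"
  shows "schedule_walk T \<pi> x s S m = x"
  using assms
proof (induction m arbitrary: x s)
  case 0
  then show ?case by simp
next
  case (Suc m)
  have "{s + 1..<s + 1 + int m} \<subseteq> {s..<s + int (Suc m)}"
    by auto
  then have "S \<inter> {s + 1..<s + 1 + int m} = {}"
    using Suc.prems by blast
  moreover have "s \<notin> S"
    using Suc.prems by auto
  ultimately show ?case
    using Suc.IH[of "s + 1"] by simp
qed

lemma schedule_walk_stable:
  assumes "S \<inter> {s + int n..<s + int m} = {}" and "n \<le> m"
  shows "schedule_walk T \<pi> x s S m = schedule_walk T \<pi> x s S n"
  using assms
proof (induction n arbitrary: x s m)
  case 0
  then show ?case
    using schedule_walk_idle by simp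
next
  case (Suc n)
  then obtain m' where "m = Suc m'" and "n \<le> m'"
    by (cases m) auto
  moreover have "S \<inter> {s + 1 + int n..<s + 1 + int m'} = {}"
    using Suc.prems(1) \<open>m = Suc m'\<close> by (simp add: add.assoc)
  ultimately have "schedule_walk T \<pi> y (s + 1) S m' = schedule_walk T \<pi> y (s + 1) S n" for y
    using Suc.IH by blast
  then show ?case
    using \<open>m = Suc m'\<close> by simp
qed

lemma schedule_walk_insert_past:
  assumes "r < s"
  shows "schedule_walk T \<pi> x s (insert r S) n = schedule_walk T \<pi> x s S n"
  using assms by (induction n arbitrary: x s) auto

lemma vpath_imp_schedule_walk:
  assumes "vpath N T \<pi> v u k"
  shows "\<exists>S. snd v \<le> snd u \<and> S \<subseteq> {snd v..<snd u} \<and> card S = k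
           \<and> fst u = schedule_walk T \<pi> (fst v) (snd v) S (nat (snd u - snd v))"
  using assms
proof (induction rule: vpath.induct)
  case (vpath_nil v)
  show ?case by (intro exI[of _ "{}"]) simp
next
  case (vpath_virtual v w u k)
  then obtain S where S: "snd w \<le> snd u" "S \<subseteq> {snd w..<snd u}" "card S = k"
      "fst u = schedule_walk T \<pi> (fst w) (snd w) S (nat (snd u - snd w))"
    by blast
  have w: "w = (fst v, snd v + 1)"
    using vpath_virtual.hyps by (simp add: virtual_edge_def)
  then have "nat (snd u - snd v) = Suc (nat (snd u - snd w))"
    using S(1) by auto
  with S w show ?case
    by (intro exI[of _ S]) auto
next
  case (vpath_physical v w u k)
  then obtain S where S: "snd w \<le> snd u" "S \<subseteq> {snd w..<snd u}" "card S = k"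
      "fst u = schedule_walk T \<pi> (fst w) (snd w) S (nat (snd u - snd w))"
    by blast
  have w: "w = (sched_perm T \<pi> (snd v) (fst v), snd v + 1)"
    using vpath_physical.hyps by (simp add: physical_edge_def)
  then have "nat (snd u - snd v) = Suc (nat (snd u - snd w))"
    using S(1) by auto
  moreover have "snd v \<notin> S" and "finite S"
    using S(2) w by (auto intro: finite_subset)
  ultimately show ?case
    using S w schedule_walk_insert_past[of "snd v" "snd v + 1"]
    by (intro exI[of _ "insert (snd v) S"]) auto
qed

lemma card_subsets_card_le:
  assumes "finite A"
  shows "card {S. S \<subseteq> A \<and> card S \<le> h} \<le> (\<Sum>j\<le>h. card A choose j)"
proof -
  have "{S. S \<subseteq> A \<and> card S \<le> h} = (\<Union>j\<le>h. {S. S \<subseteq> A \<and> card S = j})"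
    by auto
  also have "card \<dots> \<le> (\<Sum>j\<le>h. card {S. S \<subseteq> A \<and> card S = j})"
    by (rule card_UN_le) simp
  also have "\<dots> = (\<Sum>j\<le>h. card A choose j)"
    using n_subsets[OF assms] by simp
  finally show ?thesis .
qed

lemma binomial_double_le_Suc:
  assumes "3 * j + 2 \<le> L"
  shows "2 * (L choose j) \<le> L choose Suc j"
proof -
  have "Suc j * 2 \<le> L - j"
    using assms by simp
  then have "Suc j * 2 * (L choose j) \<le> (L - j) * (L choose j)"
    by (rule mult_le_mono1)
  also have "\<dots> = Suc j * (L choose Suc j)"
    by (metis binomial_absorb_comp binomial_absorption diff_mult_distrib)
  finally have "Suc j * (2 * (L choose j)) \<le> Suc j * (L choose Suc j)"
    by (simp only: mult.assoc)
  then show ?thesis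
    by (metis mult_le_cancel1 zero_less_Suc)
qed

lemma sum_binomial_le_twice:
  assumes "3 * j \<le> L"
  shows "(\<Sum>i\<le>j. L choose i) \<le> 2 * (L choose j)"
  using assms
proof (induction j)
  case 0
  then show ?case by simp
next
  case (Suc j)
  then have "(\<Sum>i\<le>Suc j. L choose i) \<le> 2 * (L choose j) + (L choose Suc j)"
    by simp
  also have "\<dots> \<le> 2 * (L choose Suc j)"
    using binomial_double_le_Suc[of j L] Suc.prems by simp
  finally show ?case .
qed

theorem lemma3p1:
  fixes N T L h a :: nat and \<pi> :: "nat \<Rightarrow> nat \<Rightarrow> nat" and t :: int
  assumes "is_schedule N T \<pi>"
    and "a \<in> {1..N}"
    and "L > 0" and "h > 0" and "3 * h \<le> L"
  shows "card {b \<in> {1..N} - {a}. \<exists>t' j. t' - t \<le> int L \<and> j \<le> h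
             \<and> vpath N T \<pi> (a, t) (b, t') j} \<le> 2 * (L choose h)"
proof -
  let ?Reach = "{b \<in> {1..N} - {a}. \<exists>t' j. t' - t \<le> int L \<and> j \<le> h
             \<and> vpath N T \<pi> (a, t) (b, t') j}"
  let ?Jumps = "{S. S \<subseteq> {t..<t + int L} \<and> card S \<le> h}"
  have "?Reach \<subseteq> (\<lambda>S. schedule_walk T \<pi> a t S L) ` ?Jumps"
  proof
    fix b assume "b \<in> ?Reach"
    then obtain t' j where "t' - t \<le> int L" "j \<le> h" "vpath N T \<pi> (a, t) (b, t') j"
      by blast
    then obtain S where S: "S \<subseteq> {t..<t'}" "card S \<le> h" "t \<le> t'" "t' \<le> t + int L"
        "b = schedule_walk T \<pi> a t S (nat (t' - t))"
      using vpath_imp_schedule_walk[of N T \<pi> "(a, t)" "(b, t')" j] by auto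
    then have "S \<inter> {t + int (nat (t' - t))..<t + int L} = {}" and "nat (t' - t) \<le> L"
      by auto
    then have "b = schedule_walk T \<pi> a t S L"
      using S(5) schedule_walk_stable[of S t "nat (t' - t)" L T \<pi> a] by simp
    moreover have "S \<in> ?Jumps"
      using S by auto
    ultimately show "b \<in> (\<lambda>S. schedule_walk T \<pi> a t S L) ` ?Jumps"
      by blast
  qed
  have "finite ?Jumps"
    by (rule finite_subset[of _ "Pow {t..<t + int L}"]) auto
  then have "card ?Reach \<le> card ?Jumps"
    using card_mono[OF finite_imageI \<open>?Reach \<subseteq> _\<close>] card_image_le order_trans by blast
  also have "\<dots> \<le> (\<Sum>j\<le>h. L choose j)"
    using card_subsets_card_le[of "{t..<t + int L}" h] by simp
  also have "\<dots> \<le> 2 * (L choose h)"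
    using sum_binomial_le_twice assms(5) .
  finally show ?thesis .
qed

end
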